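(* If $\xi<\varepsilon_{\Omega+1}$ is a limit ordinal and $\theta<\Omega$, then $\theta\le(\xi[\theta])^*\le\max\{\xi^*,\theta\}$.
   Context: $\Omega$ is the first uncountable ordinal; $\varepsilon_{\Omega+1}$ the least $\varepsilon>\Omega$ with $\omega^\varepsilon=\varepsilon$. Every $0<\xi<\varepsilon_{\Omega+1}$ has a unique $\Omega$-normal form $\xi=\Omega^{\alpha}\beta+\gamma$ with $0<\beta<\Omega$, $\gamma<\Omega^{\alpha}$. Coefficients: $C(0)=\{0\}$, $C(\Omega^\alpha\beta+\gamma)=C(\alpha)\cup C(\gamma)\cup\{\beta\}$; $\xi^*=\max C(\xi)$. For $\xi<\varepsilon_{\Omega+1}$ and $\theta<\Omega$, $\xi[\theta]$ is defined recursively on $\Omega$-normal forms: $0[\theta]=1[\theta]=0$; $(\Omega^\alpha\beta+\gamma)[\theta]=\Omega^\alpha\beta+\gamma[\theta]$ if $\gamma>0$; $(\Omega^\alpha\beta)[\theta]=\Omega^\alpha\theta$ if $\beta$ is a limit; $\Omega^{\alpha+1}[\theta]=\Omega^\alpha\theta$; $(\Omega^\alpha(\beta+1))[\theta]=\Omega^\alpha\beta+(\Omega^\alpha)[\theta]$ if $\beta>0$; $\Omega^\alpha[\theta]=\Omega^{\alpha[\theta]}$ if $\alpha$ is a limit. *)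

theory Defs
  imports "HOL-Library.Countable_Set"
begin

text \<open>Countable ordinals (ordinals below Omega) are modelled by an arbitrary
well-ordered type 'a whose order type is omega_1 (uncountable, every proper
initial segment countable).\<close>

definition ozero :: "'a::wellorder" where
  "ozero = (LEAST x. True)"

definition osuc :: "'a::wellorder \<Rightarrow> 'a" where
  "osuc b = (LEAST y. b < y)"

definition oone :: "'a::wellorder" where
  "oone = osuc ozero"

definition olimit :: "'a::wellorder \<Rightarrow> bool" where
  "olimit b \<longleftrightarrow> b \<noteq> ozero \<and> \<not> (\<exists>c. b = osuc c)"

text \<open>Omega-normal forms: OZ is 0, OT al be ga is Omega^al * be + ga.
These notations (subject to onf_wf) are exactly the ordinals below eps_{Omega+1}.\<close>

datatype 'a onf = OZ | OT "'a onf" 'a "'a onf"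

fun onf_less :: "'a::wellorder onf \<Rightarrow> 'a onf \<Rightarrow> bool" where
  "onf_less OZ OZ = False"
| "onf_less OZ (OT _ _ _) = True"
| "onf_less (OT _ _ _) OZ = False"
| "onf_less (OT a b g) (OT a' b' g') =
     (onf_less a a' \<or> (a = a' \<and> (b < b' \<or> (b = b' \<and> onf_less g g'))))"

fun onf_wf :: "'a::wellorder onf \<Rightarrow> bool" where
  "onf_wf OZ = True"
| "onf_wf (OT a b g) =
     (onf_wf a \<and> onf_wf g \<and> ozero < b \<and>
      (case g of OZ \<Rightarrow> True | OT a' _ _ \<Rightarrow> onf_less a' a))"

fun onf_plus1 :: "'a::wellorder onf \<Rightarrow> 'a onf" where
  "onf_plus1 OZ = OT OZ oone OZ"
| "onf_plus1 (OT a b g) =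
     (if a = OZ then OT OZ (osuc b) OZ else OT a b (onf_plus1 g))"

definition onf_limit :: "'a::wellorder onf \<Rightarrow> bool" where
  "onf_limit xi \<longleftrightarrow> xi \<noteq> OZ \<and> \<not> (\<exists>eta. onf_wf eta \<and> xi = onf_plus1 eta)"

fun onf_coeffs :: "'a::wellorder onf \<Rightarrow> 'a set" where
  "onf_coeffs OZ = {ozero}"
| "onf_coeffs (OT a b g) = onf_coeffs a \<union> onf_coeffs g \<union> {b}"

definition onf_star :: "'a::wellorder onf \<Rightarrow> 'a" where
  "onf_star xi = Max (onf_coeffs xi)"

definition omk :: "'a::wellorder onf \<Rightarrow> 'a \<Rightarrow> 'a onf" where
  "omk a th = (if th = ozero then OZ else OT a th OZ)"

primrec onf_fs :: "'a::wellorder onf \<Rightarrow> 'a \<Rightarrow> 'a onf" where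
  "onf_fs OZ th = OZ"
| "onf_fs (OT a b g) th =
     (let pw = (if a = OZ then OZ
                else if (\<exists>a'. onf_wf a' \<and> a = onf_plus1 a')
                  then omk (THE a'. onf_wf a' \<and> a = onf_plus1 a') th
                else OT (onf_fs a th) oone OZ)
      in if g \<noteq> OZ then OT a b (onf_fs g th)
         else if olimit b then omk a th
         else if b = oone then pw
         else OT a (THE b'. b = osuc b') pw)"

end

theory Submission
  imports Defs
begin

text \<open>Each clause keeps coefficients of \<xi>, inserts \<theta>, or, for a
  successor exponent \<alpha>+1, passes to the coefficients of \<alpha>, which are dominated by those
  of \<alpha>+1; this gives the upper bound.  For a limit \<xi> the recursion always ends in a
  clause \<Omega>^\<alpha> \<theta>, so \<theta> survives as a coefficient, which gives the lower bound.
  The hypotheses on the order type are needed only to exclude a largest countable ordinal: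
  then successor is injective on ordinals and on normal forms, so the THE-descriptions
  in the definition of \<xi>[\<theta>] pick out the intended predecessors.\<close>

lemma gt_ex_if_countable_segments:
  fixes b :: "'a::linorder"
  assumes "\<not> countable (UNIV :: 'a set)" and "\<And>b::'a. countable {x. x < b}"
  shows "\<exists>y. b < y"
proof (rule ccontr)
  assume "\<nexists>y. b < y"
  then have "UNIV = insert b {x. x < b}"
    by (auto simp: not_less) (meson antisym_conv1 not_less)
  then show False
    using assms by (metis countable_insert)
qed

lemma ozero_le: "ozero \<le> (x::'a::wellorder)"
  unfolding ozero_def by (rule Least_le) simp

lemma ozero_less_iff: "ozero < x \<longleftrightarrow> x \<noteq> (ozero::'a::wellorder)"
  using ozero_le[of x] by (auto simp: order.strict_iff_order)

lemma less_osuc: "b < y \<Longrightarrow> b < osuc (b::'a::wellorder)"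
  unfolding osuc_def by (rule LeastI)

lemma osuc_le: "b < y \<Longrightarrow> osuc b \<le> (y::'a::wellorder)"
  unfolding osuc_def by (rule Least_le)

lemma strict_mono_osuc:
  assumes "\<And>b::'a::wellorder. \<exists>y. b < y"
  shows "strict_mono (osuc :: 'a \<Rightarrow> 'a)"
proof
  fix b c :: 'a
  assume "b < c"
  then have "osuc b \<le> c" by (rule osuc_le)
  also have "c < osuc c" using assms less_osuc by blast
  finally show "osuc b < osuc c" .
qed

lemma osuc_eq_iff:
  assumes "\<And>b::'a::wellorder. \<exists>y. b < y"
  shows "osuc b = osuc c \<longleftrightarrow> b = (c::'a)"
  using strict_mono_imp_inj_on[OF strict_mono_osuc[OF assms]] by (auto simp: inj_eq)

lemma not_olimit_osuc [simp]: "\<not> olimit (osuc b)"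
  by (auto simp: olimit_def)

lemma not_olimit_oone [simp]: "\<not> olimit oone"
  by (simp add: oone_def)

lemma ordinal_cases:
  fixes b :: "'a::wellorder"
  obtains "b = ozero" | "olimit b" | "b = oone" | c where "c \<noteq> ozero" "b = osuc c"
proof (cases "b = ozero \<or> olimit b \<or> b = oone")
  case False
  then obtain c where "b = osuc c" unfolding olimit_def by blast
  moreover from this False have "c \<noteq> ozero" by (auto simp: oone_def)
  ultimately show thesis by (rule that(4)[rotated])
qed (use that in blast)

lemma onf_star_OZ [simp]: "onf_star OZ = ozero"
  by (simp add: onf_star_def)

lemma finite_onf_coeffs: "finite (onf_coeffs x)"
  by (induction x) auto

lemma onf_coeffs_nonempty: "onf_coeffs x \<noteq> {}"
  by (induction x) auto

lemma onf_star_OT [simp]: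
  "onf_star (OT a b g) = max (max (onf_star a) (onf_star g)) b"
  by (simp add: onf_star_def Max_Un finite_onf_coeffs onf_coeffs_nonempty max.commute)

lemma oone_le_onf_star:
  assumes "onf_wf x" "x \<noteq> OZ"
  shows "oone \<le> onf_star x"
proof -
  obtain a b g where x: "x = OT a b g" and "ozero < b"
    using assms by (cases x) auto
  from \<open>ozero < b\<close> have "oone \<le> b" unfolding oone_def by (rule osuc_le)
  then show ?thesis unfolding x by (simp add: le_max_iff_disj)
qed

lemma onf_star_omk_le: "onf_star (omk a th) \<le> max (onf_star a) th"
  by (simp add: omk_def ozero_le)

lemma le_onf_star_omk: "th \<le> onf_star (omk a th)"
  by (simp add: omk_def)

lemma not_onf_less_OZ [simp]: "\<not> onf_less x OZ"
  by (cases x) auto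

lemma onf_star_le_onf_star_plus1:
  assumes "\<And>b::'a::wellorder. \<exists>y. b < y" and "onf_wf (x::'a onf)"
  shows "onf_star x \<le> onf_star (onf_plus1 x)"
  using assms(2)
proof (induction x)
  case (OT a b g)
  have "b \<le> osuc b" using assms(1) less_osuc less_imp_le by blast
  with OT show ?case by (cases g) (auto simp: le_max_iff_disj ozero_le)
qed (simp add: ozero_le)

lemma onf_plus1_inj:
  assumes "\<And>b::'a::wellorder. \<exists>y. b < y"
    and "onf_wf (x::'a onf)" "onf_wf y" "onf_plus1 x = onf_plus1 y"
  shows "x = y"
  using assms(2-)
proof (induction x arbitrary: y)
  case OZ
  then show ?case
    by (cases y) (auto simp: oone_def osuc_eq_iff[OF assms(1)] split: if_splits)
next
  case (OT a b g)
  then show ?case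
    by (cases y) (auto simp: oone_def osuc_eq_iff[OF assms(1)] split: if_splits onf.splits)
qed

lemma onf_plus1_neq_OZ: "onf_plus1 x \<noteq> OZ"
  by (cases x) auto

lemma onf_wf_OT_plus1D:
  "onf_wf (OT a b (onf_plus1 eta)) \<Longrightarrow> onf_wf eta \<Longrightarrow> onf_wf (OT a b eta)"
  by (cases eta) (auto split: if_splits)

lemma onf_limit_tail:
  assumes "onf_wf (OT a b g)" "g \<noteq> OZ" "onf_limit (OT a b g)"
  shows "onf_limit g"
  unfolding onf_limit_def
proof (intro conjI notI)
  assume "\<exists>eta. onf_wf eta \<and> g = onf_plus1 eta"
  then obtain eta where "onf_wf eta" "g = onf_plus1 eta" by blast
  moreover have "a \<noteq> OZ" using assms(1,2) by (cases g) auto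
  ultimately have "onf_wf (OT a b eta)" "OT a b g = onf_plus1 (OT a b eta)"
    using assms(1) onf_wf_OT_plus1D by auto
  with assms(3) show False unfolding onf_limit_def by blast
qed (use assms(2) in blast)

lemma not_onf_limit_OT_OZ_osuc: "\<not> onf_limit (OT OZ (osuc c) OZ)"
proof (cases "c = ozero")
  case True
  then have "OT OZ (osuc c) OZ = onf_plus1 OZ" by (simp add: oone_def)
  then show ?thesis unfolding onf_limit_def by (metis onf_wf.simps(1))
next
  case False
  then have "onf_wf (OT OZ c OZ)" by (simp add: ozero_less_iff)
  moreover have "OT OZ (osuc c) OZ = onf_plus1 (OT OZ c OZ)" by simp
  ultimately show ?thesis unfolding onf_limit_def by blast
qed

lemma onf_fs_OT_osuc:
  assumes "\<And>b::'a::wellorder. \<exists>y. b < y" and "c \<noteq> ozero"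
  shows "onf_fs (OT a (osuc c) OZ) th = OT a c (onf_fs (OT a oone OZ) (th::'a))"
  using assms(2) by (simp add: Let_def oone_def osuc_eq_iff[OF assms(1)])

lemma onf_fs_pow_plus1:
  assumes "\<And>b::'a::wellorder. \<exists>y. b < y" and "onf_wf (a::'a onf)"
  shows "onf_fs (OT (onf_plus1 a) oone OZ) th = omk a th"
proof -
  have "(THE a'. onf_wf a' \<and> onf_plus1 a = onf_plus1 a') = a"
    using assms onf_plus1_inj by blast
  then show ?thesis
    using assms(2) by (auto simp: Let_def oone_def onf_plus1_neq_OZ)
qed

lemma onf_fs_pow_limit:
  "onf_limit a \<Longrightarrow> onf_fs (OT a oone OZ) th = OT (onf_fs a th) oone OZ"
  by (auto simp: Let_def oone_def onf_limit_def)

lemma onf_zero_plus1_limit_cases: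
  obtains "x = OZ" | x' where "onf_wf x'" "x = onf_plus1 x'" | "onf_limit x"
  unfolding onf_limit_def by blast

text \<open>\<open>OT a oone OZ\<close> is not a subterm of \<open>OT a b g\<close>, so the two lemmas on
  (\<Omega>^a)[\<theta>] take the induction hypothesis for \<open>a\<close> as an assumption.\<close>

lemma onf_star_fs_pow_le:
  assumes "\<And>b::'a::wellorder. \<exists>y. b < y" and "onf_wf (a::'a onf)"
    and "onf_star (onf_fs a th) \<le> max (onf_star a) th"
  shows "onf_star (onf_fs (OT a oone OZ) th) \<le> max (onf_star a) th"
proof (cases a rule: onf_zero_plus1_limit_cases)
  case 1
  then show ?thesis by (simp add: ozero_le)
next
  case (2 a')
  have "onf_star (omk a' th) \<le> max (onf_star a') th" by (rule onf_star_omk_le)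
  also have "\<dots> \<le> max (onf_star a) th"
    using onf_star_le_onf_star_plus1[OF assms(1) \<open>onf_wf a'\<close>] 2 by (intro max.mono) simp_all
  finally show ?thesis using 2 onf_fs_pow_plus1[OF assms(1)] by simp
next
  case 3
  then have "a \<noteq> OZ" by (simp add: onf_limit_def)
  with assms(2) have "oone \<le> onf_star a" by (rule oone_le_onf_star)
  with assms(3) show ?thesis
    unfolding onf_fs_pow_limit[OF 3] by (auto simp del: onf_fs.simps simp: le_max_iff_disj ozero_le)
qed

lemma onf_star_fs_le:
  assumes "\<And>b::'a::wellorder. \<exists>y. b < y" and "onf_wf (xi::'a onf)"
  shows "onf_star (onf_fs xi th) \<le> max (onf_star xi) th"
  using assms(2)
proof (induction xi)
  case OZ
  then show ?case by (simp add: ozero_le)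
next
  case (OT a b g)
  then have "onf_wf a" "onf_wf g" "b \<noteq> ozero" by (auto simp: ozero_less_iff)
  have pow: "onf_star (onf_fs (OT a oone OZ) th) \<le> max (onf_star a) th"
    using onf_star_fs_pow_le[OF assms(1) \<open>onf_wf a\<close> OT.IH(1)[OF \<open>onf_wf a\<close>]] .
  show ?case
  proof (cases "g = OZ")
    case False
    then have "onf_fs (OT a b g) th = OT a b (onf_fs g th)" by simp
    then show ?thesis using OT.IH(2)[OF \<open>onf_wf g\<close>] by (auto simp: le_max_iff_disj)
  next
    case True
    show ?thesis
    proof (cases b rule: ordinal_cases)
      case 2
      then show ?thesis using True onf_star_omk_le[of a th] by (auto simp: le_max_iff_disj)
    next
      case 3
      then have "onf_fs (OT a b g) th = onf_fs (OT a oone OZ) th" using True by simp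
      with pow show ?thesis by (auto simp del: onf_fs.simps simp: le_max_iff_disj)
    next
      case (4 c)
      then have "onf_fs (OT a b g) th = OT a c (onf_fs (OT a oone OZ) th)"
        using True onf_fs_OT_osuc[OF assms(1)] by simp
      moreover have "c < b" using 4 less_osuc assms(1) by blast
      ultimately show ?thesis using pow by (auto simp del: onf_fs.simps simp: le_max_iff_disj)
    qed (use \<open>b \<noteq> ozero\<close> in blast)
  qed
qed

lemma le_onf_star_fs_pow:
  assumes "\<And>b::'a::wellorder. \<exists>y. b < y" and "(a::'a onf) \<noteq> OZ"
    and "onf_limit a \<Longrightarrow> th \<le> onf_star (onf_fs a th)"
  shows "th \<le> onf_star (onf_fs (OT a oone OZ) th)"
proof (cases a rule: onf_zero_plus1_limit_cases)
  case 1
  with assms(2) show ?thesis by blast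
next
  case (2 a')
  then show ?thesis using onf_fs_pow_plus1[OF assms(1)] le_onf_star_omk by metis
next
  case 3
  with assms(3) show ?thesis
    unfolding onf_fs_pow_limit[OF 3] by (auto simp del: onf_fs.simps simp: le_max_iff_disj)
qed

lemma le_onf_star_fs:
  assumes "\<And>b::'a::wellorder. \<exists>y. b < y" and "onf_wf (xi::'a onf)" "onf_limit xi"
  shows "th \<le> onf_star (onf_fs xi th)"
  using assms(2,3)
proof (induction xi)
  case OZ
  then show ?case by (simp add: onf_limit_def)
next
  case (OT a b g)
  then have "onf_wf a" "onf_wf g" "b \<noteq> ozero" by (auto simp: ozero_less_iff)
  show ?case
  proof (cases "g = OZ")
    case False
    then have "onf_limit g" using OT.prems onf_limit_tail by blast
    then show ?thesis using OT.IH(2)[OF \<open>onf_wf g\<close>] False by (auto simp: le_max_iff_disj)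
  next
    case True
    have pow: "th \<le> onf_star (onf_fs (OT a oone OZ) th)" if "b = osuc c" for c
    proof (rule le_onf_star_fs_pow[OF assms(1)])
      show "a \<noteq> OZ" using OT.prems(2) True that not_onf_limit_OT_OZ_osuc by blast
    qed (rule OT.IH(1)[OF \<open>onf_wf a\<close>])
    show ?thesis
    proof (cases b rule: ordinal_cases)
      case 2
      then show ?thesis using True le_onf_star_omk by simp
    next
      case 3
      then have "onf_fs (OT a b g) th = onf_fs (OT a oone OZ) th" using True by simp
      with pow[of ozero] 3 show ?thesis by (simp del: onf_fs.simps add: oone_def)
    next
      case (4 c)
      then have "onf_fs (OT a b g) th = OT a c (onf_fs (OT a oone OZ) th)"
        using True onf_fs_OT_osuc[OF assms(1)] by simp
      with pow[OF 4(2)] show ?thesis by (auto simp del: onf_fs.simps simp: le_max_iff_disj)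
    qed (use \<open>b \<noteq> ozero\<close> in blast)
  qed
qed

theorem lemma2p2:
  fixes xi :: "'a::wellorder onf" and th :: 'a
  assumes "\<not> countable (UNIV :: 'a set)"
    and "\<And>b::'a. countable {x. x < b}"
    and "onf_wf xi"
    and "onf_limit xi"
  shows "th \<le> onf_star (onf_fs xi th) \<and> onf_star (onf_fs xi th) \<le> max (onf_star xi) th"
proof -
  have no_top: "\<exists>y. b < y" for b :: 'a
    using assms(1,2) by (rule gt_ex_if_countable_segments)
  show ?thesis
    using le_onf_star_fs[OF no_top assms(3,4)] onf_star_fs_le[OF no_top assms(3)] by blast
qed

end
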